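(* For $\tau$ in the upper half-plane, $\mathfrak{p}^2(\tau)\mathfrak{p}^2(2\tau)+\mathfrak{p}^2(\tau)-2\mathfrak{p}(2\tau)=0$.
   Context: $q=e^{2\pi i\tau}$, $q^r:=e^{2\pi i r\tau}$, and $\mathfrak{p}(\tau)=2q^{1/16}\prod_{n\ge1}\left(\frac{1+q^{n/2}}{1+q^{n/2-1/4}}\right)^2$ (equivalently $\mathfrak{f}_2(\tau/2)^2/\mathfrak{f}(\tau/2)^2$ with Weber–Schläfli functions $\mathfrak{f},\mathfrak{f}_2$). *)

theory Defs
  imports "HOL-Analysis.Analysis"
begin

definition qpow :: "real \<Rightarrow> complex \<Rightarrow> complex" where
  "qpow r \<tau> = exp (2 * of_real pi * \<i> * of_real r * \<tau>)"

definition pfun :: "complex \<Rightarrow> complex" where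
  "pfun \<tau> = 2 * qpow (1/16) \<tau> *
     (\<Prod>m. ((1 + qpow (real (Suc m) / 2) \<tau>) /
             (1 + qpow (real (Suc m) / 2 - 1/4) \<tau>)) ^ 2)"

end

theory Submission
  imports Defs "HOL-Complex_Analysis.Complex_Analysis"
begin

text \<open>With x = q^(1/4) and w = q^(1/16) one has p(tau) = 2 w P(x) and p(2 tau) = 2 w^2 P(x^2), where
  P(x) = prod_m ((1 + x^(2m+2)) / (1 + x^(2m+1)))^2 = (E(x,x) / E(x,1))^2 for the product
  E(y,z) = prod_(n>=0) (1 + y^(2n+1) z). The Jacobi triple product
  E(y,z) E(y,1/z) = c(y) sum_(n in Z) y^(n^2) z^n, obtained by comparing Laurent coefficients
  through the quasi-periodicity of E(y,z) E(y,1/z) and Liouville's theorem, turns P into a quotient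
  of theta series: P(y) = Phi(y) / (2 Theta(y)) with Theta(y) = sum y^(n^2) and
  Phi(y) = sum y^(n^2+n). Splitting Z^2 according to the parity of m + n gives the duplication
  formulas Theta(x)^2 = Theta(x^2)^2 + x Phi(x^2)^2 and Phi(x)^2 = 2 Phi(x^2) Theta(x^2), hence
  P(x)^2 (1 + 4 x P(x^2)^2) = P(x^2), which is the claimed identity divided by 4 w^2.\<close>

lemma norm_power_less_one: "norm (y::'a::real_normed_div_algebra) < 1 \<Longrightarrow> n > 0 \<Longrightarrow> norm (y^n) < 1"
  by (simp add: norm_power power_less_one_iff)

lemma one_plus_nonzero: "norm (w::'a::real_normed_div_algebra) < 1 \<Longrightarrow> 1 + w \<noteq> 0"
  by (metis add_eq_0_iff norm_minus_cancel norm_one less_irrefl)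

lemma one_minus_power_nonzero: "norm (y::'a::real_normed_div_algebra) < 1 \<Longrightarrow> n > 0 \<Longrightarrow> 1 - y^n \<noteq> 0"
  using one_plus_nonzero[of "- (y^n)"] norm_power_less_one[of y n] by simp

lemma norm_one_minus_power_ge:
  fixes y :: "'a::real_normed_div_algebra" assumes "norm y < 1" "n > 0"
  shows "1 - norm y \<le> norm (1 - y^n)"
proof -
  have "norm y ^ n \<le> norm y ^ 1" by (rule power_decreasing) (use assms in auto)
  then show ?thesis using norm_triangle_ineq2[of 1 "y^n"] by (simp add: norm_power)
qed

lemma square_plus_self_nonneg: "0 \<le> (n::int)^2 + n"
proof (cases "n \<ge> 0")
  case False
  then have "0 \<le> (-n) * (-n - 1)" by (intro mult_nonneg_nonneg) auto
  then show ?thesis by (simp add: power2_eq_square algebra_simps)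
qed simp

lemma power_nat_add:
  fixes x :: "'a::monoid_mult" and a b :: int
  shows "0 \<le> a \<Longrightarrow> 0 \<le> b \<Longrightarrow> x ^ nat a * x ^ nat b = x ^ nat (a + b)"
  by (simp add: nat_add_distrib power_add)

lemma power2_power_nat: "0 \<le> i \<Longrightarrow> ((x::'a::monoid_mult)^2) ^ nat i = x ^ nat (2*i)"
  by (simp add: nat_mult_distrib power_mult)

lemma power_nat_square_mult_powi:
  fixes y :: "'a::field" and n :: int assumes "y \<noteq> 0"
  shows "y ^ nat (n^2) * y powi n = y ^ nat (n^2 + n)"
proof (cases "n \<ge> 0")
  case True
  then have "nat (n^2 + n) = nat (n^2) + nat n" by (simp add: nat_add_distrib)
  then show ?thesis using True by (simp add: power_int_def power_add)
next
  case False
  then have "nat (n^2) = nat (n^2 + n) + nat (-n)"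
    using square_plus_self_nonneg[of n] by (simp flip: nat_add_distrib)
  then show ?thesis using False assms by (simp add: power_int_def power_add power_inverse field_simps)
qed

lemma has_sum_product:
  fixes f :: "'a \<Rightarrow> complex" and g :: "'b \<Rightarrow> complex"
  assumes f: "(f has_sum a) A" and g: "(g has_sum b) B"
  shows "((\<lambda>(x,y). f x * g y) has_sum (a*b)) (A \<times> B)"
proof -
  have fa: "(\<lambda>x. norm (f x)) summable_on A" and ga: "(\<lambda>y. norm (g y)) summable_on B"
    using f g summable_on_iff_abs_summable_on_complex summable_on_def by blast+
  have "(\<lambda>p. norm ((\<lambda>(x,y). f x * g y) p)) summable_on (Sigma A (\<lambda>_. B))"
  proof (subst Infinite_Sum.abs_summable_on_Sigma_iff, intro conjI ballI)
    fix x assume "x \<in> A"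
    show "(\<lambda>y. norm (case (x, y) of (x, y) \<Rightarrow> f x * g y)) summable_on B"
      using summable_on_cmult_right[OF ga, of "norm (f x)"] by (simp add: norm_mult)
  next
    have "(\<lambda>x. norm (f x) * (\<Sum>\<^sub>\<infinity>y\<in>B. norm (g y))) summable_on A"
      by (rule summable_on_cmult_left[OF fa])
    then show "(\<lambda>x. norm (\<Sum>\<^sub>\<infinity>y\<in>B. norm (case (x, y) of (x, y) \<Rightarrow> f x * g y))) summable_on A"
      by (simp add: norm_mult infsum_cmult_right' infsum_nonneg)
  qed
  then have "(\<lambda>(x,y). f x * g y) summable_on Sigma A (\<lambda>_. B)"
    using abs_summable_summable by blast
  then show ?thesis
    by (intro has_sum_SigmaI[where g="\<lambda>x. f x * b"] has_sum_cmult_left[OF f])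
       (use has_sum_cmult_right[OF g] in auto)
qed

lemma has_sum_Sigma_row_sums:
  fixes c :: "nat \<Rightarrow> nat \<Rightarrow> complex"
  assumes sum: "((\<lambda>(n,k). c n k * u n) has_sum V) UNIV" and u: "\<And>n. u n \<noteq> 0"
  shows "((\<lambda>n. (\<Sum>\<^sub>\<infinity>k. c n k) * u n) has_sum V) UNIV"
proof -
  have "((\<lambda>(n,k). c n k * u n) has_sum V) (Sigma UNIV (\<lambda>_. UNIV))" using sum by simp
  then show ?thesis
  proof (rule has_sum_SigmaD)
    fix n
    have "(\<lambda>k. c n k * u n) summable_on UNIV"
      using summable_on_SigmaD1[of "\<lambda>n k. c n k * u n" UNIV "\<lambda>_. UNIV" n] sum summable_on_def by auto
    then have "(\<lambda>k. c n k) summable_on UNIV" using summable_on_cmult_left'[OF u] by blast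
    then show "((\<lambda>k. case (n, k) of (n, k) \<Rightarrow> c n k * u n) has_sum (\<Sum>\<^sub>\<infinity>k. c n k) * u n) UNIV"
      using has_sum_cmult_left[OF has_sum_infsum] by simp
  qed
qed

lemma has_sum_nat_pairs_diagonal_split:
  fixes h :: "nat \<times> nat \<Rightarrow> 'a::banach"
  assumes "(h has_sum S) UNIV"
  obtains A B where "((\<lambda>(n,k). h (k+n, k)) has_sum A) UNIV"
    and "((\<lambda>(n,k). h (k, k+n+1)) has_sum B) UNIV" and "S = A + B"
proof -
  define diag_low where "diag_low = (\<lambda>(n::nat,k::nat). (k+n, k))"
  define diag_up where "diag_up = (\<lambda>(n::nat,k::nat). (k, k+n+1))"
  have inj: "inj diag_low" "inj diag_up" by (auto simp: diag_low_def diag_up_def inj_on_def)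
  have "range diag_low \<inter> range diag_up = {}" by (auto simp: diag_low_def diag_up_def)
  moreover have "range diag_low \<union> range diag_up = UNIV"
  proof (intro equalityI subsetI)
    fix p :: "nat \<times> nat"
    obtain j k where p: "p = (j,k)" by force
    then have "p = diag_low (j-k, k) \<or> p = diag_up (k-j-1, j)"
      by (cases "k \<le> j") (auto simp: diag_low_def diag_up_def)
    then show "p \<in> range diag_low \<union> range diag_up" by blast
  qed simp
  moreover have "(h has_sum infsum h (range diag_low)) (range diag_low)"
    and "(h has_sum infsum h (range diag_up)) (range diag_up)"
    using assms summable_on_def summable_on_subset_banach by (metis has_sum_infsum subset_UNIV)+
  ultimately have "S = infsum h (range diag_low) + infsum h (range diag_up)"
    using has_sum_Un_disjoint assms has_sum_unique by metis
  moreover have "((\<lambda>(n,k). h (k+n, k)) has_sum infsum h (range diag_low)) UNIV"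
    and "((\<lambda>(n,k). h (k, k+n+1)) has_sum infsum h (range diag_up)) UNIV"
    using has_sum_reindex[OF inj(1)] has_sum_reindex[OF inj(2)]
      \<open>(h has_sum _) (range diag_low)\<close> \<open>(h has_sum _) (range diag_up)\<close>
    by (auto simp: diag_low_def diag_up_def o_def case_prod_unfold)
  ultimately show ?thesis using that by blast
qed

lemma has_sum_int_nat_split:
  fixes f :: "int \<Rightarrow> 'a::topological_comm_monoid_add"
  assumes "((\<lambda>n. f (int n)) has_sum a) UNIV" and "((\<lambda>n. f (- int n - 1)) has_sum b) UNIV"
  shows "(f has_sum (a+b)) UNIV"
proof -
  have inj: "inj int" "inj (\<lambda>n::nat. - int n - 1)" by (auto simp: inj_on_def)
  have "(f has_sum a) (range int)" and "(f has_sum b) (range (\<lambda>n::nat. - int n - 1))"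
    using assms has_sum_reindex[OF inj(1), of f] has_sum_reindex[OF inj(2), of f] by (simp_all add: o_def)
  moreover have "range int \<inter> range (\<lambda>n::nat. - int n - 1) = {}" by auto
  moreover have "range int \<union> range (\<lambda>n::nat. - int n - 1) = UNIV"
  proof (intro equalityI subsetI)
    fix k :: int
    have "k = int (nat k) \<or> k = - int (nat (-k-1)) - 1" by linarith
    then show "k \<in> range int \<union> range (\<lambda>n::nat. - int n - 1)" by blast
  qed simp
  ultimately show ?thesis using has_sum_Un_disjoint by metis
qed

lemma has_sum_int_pairs_parity_split:
  fixes h :: "int \<times> int \<Rightarrow> 'a::topological_comm_monoid_add"
  assumes "((\<lambda>(i,j). h (i+j, i-j)) has_sum a) UNIV"
    and "((\<lambda>(i,j). h (i+j+1, i-j)) has_sum b) UNIV"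
  shows "(h has_sum (a+b)) UNIV"
proof -
  define even_pairs where "even_pairs = (\<lambda>(i::int,j::int). (i+j, i-j))"
  define odd_pairs where "odd_pairs = (\<lambda>(i::int,j::int). (i+j+1, i-j))"
  have "inj even_pairs" "inj odd_pairs" by (auto simp: inj_on_def even_pairs_def odd_pairs_def)
  then have "(h has_sum a) (range even_pairs)" "(h has_sum b) (range odd_pairs)"
    using assms has_sum_reindex by (auto simp: even_pairs_def odd_pairs_def o_def case_prod_unfold)
  moreover have "range even_pairs \<inter> range odd_pairs = {}"
    by (auto simp: even_pairs_def odd_pairs_def) presburger
  moreover have "range even_pairs \<union> range odd_pairs = UNIV"
  proof (intro equalityI subsetI)
    fix p :: "int \<times> int"
    obtain m n where p: "p = (m,n)" by force
    show "p \<in> range even_pairs \<union> range odd_pairs"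
    proof (cases "even (m+n)")
      case True
      then have "p = even_pairs ((m+n) div 2, (m-n) div 2)" unfolding p even_pairs_def by simp presburger
      then show ?thesis by blast
    next
      case False
      then have "p = odd_pairs ((m+n) div 2, (m+n) div 2 - n)" unfolding p odd_pairs_def by simp presburger
      then show ?thesis by blast
    qed
  qed simp
  ultimately show ?thesis using has_sum_Un_disjoint by metis
qed

lemma powser_coeff_eq_0_if_constant:
  fixes c :: "nat \<Rightarrow> complex"
  assumes sums: "\<And>z. (\<lambda>n. c n * z^n) sums f z" and const: "\<And>z. f z = f 0" and "m > 0"
  shows "c m = 0"
proof (rule ccontr)
  assume cm: "c m \<noteq> 0"
  have f0: "f 0 = c 0" using sums[of 0] powser_sums_zero sums_unique2 by blast
  define a where "a = (\<lambda>n. if n = 0 then 0 else c n)"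
  have "(\<lambda>n. a n * (z - 0)^n) sums (f z - c 0)" for z
  proof -
    have "(\<lambda>n. c n * z^n - (if n = 0 then c 0 else 0)) sums (f z - c 0)"
      by (intro sums_diff sums) (use sums_single[of 0 "\<lambda>_. c 0"] in simp)
    moreover have "c n * z^n - (if n = 0 then c 0 else 0) = a n * (z - 0)^n" for n
      by (simp add: a_def)
    ultimately show ?thesis by simp
  qed
  then obtain s where "0 < s" and "\<And>z. z \<in> cball 0 s - {0} \<Longrightarrow> f z - c 0 \<noteq> 0"
    using powser_0_nonzero[where r=1 and a=a and \<xi>=0 and f="\<lambda>z. f z - c 0" and m=m]
      f0 cm \<open>m > 0\<close> by (auto simp: a_def)
  then have "f (of_real s) - c 0 \<noteq> 0" by simp
  then show False using const f0 by simp
qed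

lemma entire_constant_if_continuous_at_infinity:
  fixes f g :: "complex \<Rightarrow> complex"
  assumes hol: "f holomorphic_on UNIV" and g: "continuous_on (cball 0 1) g"
    and fg: "\<And>z. z \<noteq> 0 \<Longrightarrow> f z = g (1/z)"
  shows "f constant_on UNIV"
proof (rule Liouville_theorem[OF hol])
  have "range f \<subseteq> f ` cball 0 1 \<union> g ` cball 0 1"
  proof
    fix v assume "v \<in> range f"
    then obtain z where v: "v = f z" by blast
    show "v \<in> f ` cball 0 1 \<union> g ` cball 0 1"
    proof (cases "norm z \<le> 1")
      case False
      then have "1/z \<in> cball 0 1" and "z \<noteq> 0" by (auto simp: norm_divide divide_simps)
      then show ?thesis using v fg by blast
    qed (use v in auto)
  qed
  moreover have "continuous_on (cball 0 1) f"
    using hol holomorphic_on_imp_continuous_on holomorphic_on_subset by blast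
  ultimately show "bounded (range f)"
    by (meson bounded_Un bounded_subset compact_cball compact_continuous_image compact_imp_bounded g)
qed

section \<open>Euler's product\<close>

text \<open>The product E(y,z) = prod_(n>=0) (1 + y^(2n+1) z), introduced through its power series in z;
  the recursion for the coefficients is forced by the functional equation E(z) = (1 + y z) E(y^2 z).\<close>

fun oddprod_coeff :: "complex \<Rightarrow> nat \<Rightarrow> complex" where
  "oddprod_coeff y 0 = 1"
| "oddprod_coeff y (Suc k) = oddprod_coeff y k * y^(2*k+1) / (1 - y^(2*k+2))"

definition oddprod :: "complex \<Rightarrow> complex \<Rightarrow> complex" where
  "oddprod y z = (\<Sum>k. oddprod_coeff y k * z^k)"

lemma summable_norm_oddprod:
  fixes y z :: complex assumes y: "norm y < 1"
  shows "summable (\<lambda>k. norm (oddprod_coeff y k * z^k))"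
proof -
  define d where "d = 1 - norm y"
  have "(\<lambda>k. norm y ^ k * norm z) \<longlonglongrightarrow> 0 * norm z"
    by (intro tendsto_mult tendsto_const LIMSEQ_power_zero) (use y in auto)
  then have "eventually (\<lambda>k. norm y ^ k * norm z < d/2) sequentially"
    using y by (intro order_tendstoD) (auto simp: d_def)
  then obtain N where N: "\<And>k. k \<ge> N \<Longrightarrow> norm y ^ k * norm z < d/2"
    by (auto simp: eventually_sequentially)
  show ?thesis
  proof (rule summable_ratio_test[where c="1/2" and N=N])
    fix k assume k: "k \<ge> N"
    have low: "d \<le> norm (1 - y^(2*k+2))"
      unfolding d_def by (rule norm_one_minus_power_ge[OF y]) simp
    have "norm y ^ (2*k+1) \<le> norm y ^ k" by (rule power_decreasing) (use y in auto)
    then have "2 * (norm y ^ (2*k+1) * norm z) \<le> norm (1 - y^(2*k+2))"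
      using N[OF k] low mult_right_mono[of _ _ "norm z"] by fastforce
    moreover have "norm (1 - y^(2*k+2)) > 0"
      using low y by (simp only: d_def)
    ultimately have "norm y ^ (2*k+1) * norm z / norm (1 - y^(2*k+2)) \<le> 1/2"
      by (simp add: field_simps)
    then have "norm (oddprod_coeff y k * z^k) * (norm y ^ (2*k+1) * norm z / norm (1 - y^(2*k+2)))
        \<le> norm (oddprod_coeff y k * z^k) * (1/2)"
      by (intro mult_left_mono) auto
    then show "norm (norm (oddprod_coeff y (Suc k) * z ^ Suc k))
        \<le> 1/2 * norm (norm (oddprod_coeff y k * z ^ k))"
      by (simp add: norm_mult norm_divide norm_power mult_ac)
  qed simp
qed

lemma oddprod_sums: "norm y < 1 \<Longrightarrow> (\<lambda>k. oddprod_coeff y k * z^k) sums oddprod y z"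
  unfolding oddprod_def by (rule summable_sums[OF summable_norm_cancel[OF summable_norm_oddprod]])

lemma oddprod_has_sum: "norm y < 1 \<Longrightarrow> ((\<lambda>k. oddprod_coeff y k * z^k) has_sum oddprod y z) UNIV"
  by (rule norm_summable_imp_has_sum[OF summable_norm_oddprod oddprod_sums])

lemma oddprod_at_0 [simp]: "oddprod y 0 = 1"
  unfolding oddprod_def by (subst powser_zero) simp

lemma isCont_oddprod: "norm y < 1 \<Longrightarrow> isCont (oddprod y) z"
  unfolding oddprod_def[abs_def]
  by (rule isCont_powser_converges_everywhere) (rule summable_norm_cancel[OF summable_norm_oddprod])

lemma oddprod_functional_eq:
  fixes y z :: complex assumes y: "norm y < 1"
  shows "oddprod y z = (1 + y*z) * oddprod y (y^2*z)"
proof -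
  define A where "A = (\<lambda>k. oddprod_coeff y k * (y^2*z)^k)"
  define g where "g = (\<lambda>k. if k = 0 then 0 else y*z * A (k - 1))"
  have sA: "A sums oddprod y (y^2*z)" unfolding A_def by (rule oddprod_sums[OF y])
  have "(\<lambda>k. g (Suc k)) sums (y*z * oddprod y (y^2*z))"
    using sums_mult[OF sA] by (simp add: g_def)
  then have "g sums (y*z * oddprod y (y^2*z))" by (subst (asm) sums_Suc_iff) (simp add: g_def)
  then have "(\<lambda>k. A k + g k) sums ((1 + y*z) * oddprod y (y^2*z))"
    using sums_add[OF sA] by (simp add: distrib_right)
  moreover have "A k + g k = oddprod_coeff y k * z^k" for k
  proof (cases k)
    case (Suc m)
    have "1 - y^(2*m+2) \<noteq> 0" by (rule one_minus_power_nonzero[OF y]) simp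
    have p1: "(y^2*z)^(Suc m) = y^(2*m+2) * z^(Suc m)"
      by (simp only: power_mult_distrib power_mult[symmetric]) simp
    have p2: "y*z*(y^2*z)^m = y^(2*m+1) * z^(Suc m)"
      by (simp only: power_mult_distrib power_mult[symmetric]) (simp add: mult_ac)
    have "A k + g k = oddprod_coeff y (Suc m) * (y^2*z)^(Suc m) + oddprod_coeff y m * (y*z*(y^2*z)^m)"
      by (simp add: A_def g_def Suc mult_ac)
    also have "\<dots> = z^(Suc m) * (oddprod_coeff y (Suc m) * y^(2*m+2) + oddprod_coeff y m * y^(2*m+1))"
      unfolding p1 p2 by (simp add: algebra_simps)
    also have "\<dots> = oddprod_coeff y k * z^k"
      using \<open>1 - y^(2*m+2) \<noteq> 0\<close> by (simp add: Suc field_simps)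
    finally show ?thesis .
  qed (simp add: A_def g_def)
  ultimately have "(\<lambda>k. oddprod_coeff y k * z^k) sums ((1 + y*z) * oddprod y (y^2*z))"
    by simp
  then show ?thesis using oddprod_sums[OF y] sums_unique2 by blast
qed

lemma oddprod_eq_partial_prod:
  fixes y z :: complex assumes y: "norm y < 1"
  shows "oddprod y z = (\<Prod>n<N. 1 + y^(2*n+1)*z) * oddprod y (y^(2*N)*z)"
proof (induction N)
  case (Suc N)
  have "oddprod y (y^(2*N)*z) = (1 + y^(2*N+1)*z) * oddprod y (y^(2*Suc N)*z)"
    using oddprod_functional_eq[OF y, of "y^(2*N)*z"] by (simp add: mult_ac power2_eq_square)
  with Suc.IH show ?case by (simp add: mult_ac)
qed simp

lemma LIMSEQ_oddprod:
  fixes y z :: complex assumes y: "norm y < 1"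
  shows "(\<lambda>N. \<Prod>n<N. 1 + y^(2*n+1)*z) \<longlonglongrightarrow> oddprod y z"
proof -
  have "(\<lambda>N. (y^2)^N * z) \<longlonglongrightarrow> 0 * z"
    using y by (intro tendsto_mult tendsto_const LIMSEQ_power_zero) (simp add: norm_power abs_square_less_1)
  then have "(\<lambda>N. oddprod y (y^(2*N)*z)) \<longlonglongrightarrow> 1"
    using isCont_tendsto_compose[OF isCont_oddprod[OF y, of 0]] by (simp add: power_mult)
  then have "(\<lambda>N. oddprod y z / oddprod y (y^(2*N)*z)) \<longlonglongrightarrow> oddprod y z"
    using tendsto_divide[OF tendsto_const] by fastforce
  moreover have "eventually (\<lambda>N. oddprod y (y^(2*N)*z) \<noteq> 0) sequentially"
    by (rule tendsto_imp_eventually_ne[OF \<open>_ \<longlonglongrightarrow> 1\<close>]) simp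
  then have "eventually (\<lambda>N. oddprod y z / oddprod y (y^(2*N)*z) = (\<Prod>n<N. 1 + y^(2*n+1)*z)) sequentially"
  proof eventually_elim
    case (elim N)
    then show ?case by (subst oddprod_eq_partial_prod[OF y, of z N]) simp
  qed
  ultimately show ?thesis by (rule Lim_transform_eventually)
qed

lemma oddprod_nonzero:
  fixes y z :: complex assumes y: "norm y < 1" and nz: "\<And>n. 1 + y^(2*n+1)*z \<noteq> 0"
  shows "oddprod y z \<noteq> 0"
proof -
  define f where "f = (\<lambda>n. 1 + y^(2*n+1)*z)"
  have "summable (\<lambda>n. norm y * norm z * (norm y ^ 2) ^ n)"
    using y by (intro summable_mult summable_geometric) (simp add: abs_square_less_1)
  moreover have "norm (f n - 1) = norm y * norm z * (norm y ^ 2) ^ n" for n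
    by (simp add: f_def norm_mult norm_power power_add power_mult[symmetric] mult_ac)
  ultimately have cp: "convergent_prod f"
    by (intro abs_convergent_prod_imp_convergent_prod summable_imp_abs_convergent_prod) simp
  have "prodinf f \<noteq> 0" by (rule prodinf_nonzero[OF cp]) (use nz in \<open>simp add: f_def\<close>)
  moreover have "(\<lambda>N. \<Prod>n<N. f n) \<longlonglongrightarrow> prodinf f"
    by (rule has_prod_imp_tendsto'[OF convergent_prod_has_prod[OF cp]])
  moreover have "(\<lambda>N. \<Prod>n<N. f n) \<longlonglongrightarrow> oddprod y z" unfolding f_def by (rule LIMSEQ_oddprod[OF y])
  ultimately show ?thesis using LIMSEQ_unique by metis
qed

lemma oddprod_1_nonzero:
  assumes "norm y < 1" shows "oddprod y 1 \<noteq> 0"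
proof (rule oddprod_nonzero[OF assms])
  show "1 + y^(2*n+1) * 1 \<noteq> 0" for n
    using one_plus_nonzero[OF norm_power_less_one[OF assms, of "2*n+1"]] by simp
qed

lemma oddprod_self_nonzero:
  assumes "norm y < 1" shows "oddprod y y \<noteq> 0"
proof (rule oddprod_nonzero[OF assms])
  show "1 + y^(2*n+1) * y \<noteq> 0" for n
    using one_plus_nonzero[OF norm_power_less_one[OF assms, of "2*n+2"]] by (simp add: mult_ac)
qed

lemma oddprod_inverse_self: "norm y < 1 \<Longrightarrow> y \<noteq> 0 \<Longrightarrow> oddprod y (1/y) = 2 * oddprod y y"
  using oddprod_functional_eq[of y "1/y"] by (simp add: power2_eq_square)

section \<open>The Jacobi triple product\<close>

text \<open>The coefficient of z^n, and of z^-n, in the Laurent expansion of E(y,z) E(y,1/z).\<close>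

definition laurent_coeff :: "complex \<Rightarrow> nat \<Rightarrow> complex" where
  "laurent_coeff y n = (\<Sum>\<^sub>\<infinity>k. oddprod_coeff y (k+n) * oddprod_coeff y k)"

lemma oddprod_mult_laurent:
  fixes y z w :: complex assumes y: "norm y < 1" and zw: "z * w = 1"
  obtains V1 V2 where "((\<lambda>n. laurent_coeff y n * z^n) has_sum V1) UNIV"
    and "((\<lambda>n. laurent_coeff y (Suc n) * w^(Suc n)) has_sum V2) UNIV"
    and "oddprod y z * oddprod y w = V1 + V2"
proof -
  define c where "c = oddprod_coeff y"
  define h where "h = (\<lambda>(j,k). c j * z^j * (c k * w^k))"
  have "(h has_sum (oddprod y z * oddprod y w)) UNIV"
    using has_sum_product[OF oddprod_has_sum[OF y, of z] oddprod_has_sum[OF y, of w]]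
    by (simp add: h_def c_def)
  then obtain V1 V2 where V1: "((\<lambda>(n,k). h (k+n, k)) has_sum V1) UNIV"
    and V2: "((\<lambda>(n,k). h (k, k+n+1)) has_sum V2) UNIV" and eq: "oddprod y z * oddprod y w = V1 + V2"
    by (rule has_sum_nat_pairs_diagonal_split)
  have zwk: "z^k * w^k = 1" for k :: nat by (metis power_mult_distrib power_one zw)
  have "h (k+n, k) = c (k+n) * c k * z^n * (z^k * w^k)"
    and "h (k, k+n+1) = c (k + Suc n) * c k * w^(Suc n) * (z^k * w^k)" for n k
    by (simp_all add: h_def power_add algebra_simps)
  then have low: "h (k+n, k) = c (k+n) * c k * z^n"
    and up: "h (k, k+n+1) = c (k + Suc n) * c k * w^(Suc n)" for n k
    by (simp_all add: zwk)
  have "z \<noteq> 0" "w \<noteq> 0" using zw by auto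
  have "((\<lambda>n. laurent_coeff y n * z^n) has_sum V1) UNIV"
    unfolding laurent_coeff_def
    by (rule has_sum_Sigma_row_sums) (use V1 in \<open>simp only: low c_def\<close>, use \<open>z \<noteq> 0\<close> in simp)
  moreover have "((\<lambda>n. laurent_coeff y (Suc n) * w^(Suc n)) has_sum V2) UNIV"
    unfolding laurent_coeff_def
    by (rule has_sum_Sigma_row_sums) (use V2 in \<open>simp only: up c_def\<close>, use \<open>w \<noteq> 0\<close> in simp)
  ultimately show ?thesis using that eq by blast
qed

definition laurent_pos :: "complex \<Rightarrow> complex \<Rightarrow> complex" where
  "laurent_pos y z = (\<Sum>n. laurent_coeff y n * z^n)"

lemma summable_laurent_pos:
  assumes y: "norm y < 1" shows "summable (\<lambda>n. laurent_coeff y n * z^n)"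
proof (cases "z = 0")
  case False
  then obtain V where "((\<lambda>n. laurent_coeff y n * z^n) has_sum V) UNIV"
    using oddprod_mult_laurent[OF y, of z "1/z"] by auto
  then show ?thesis using has_sum_imp_sums sums_summable by blast
qed simp

lemma laurent_pos_sums: "norm y < 1 \<Longrightarrow> (\<lambda>n. laurent_coeff y n * z^n) sums laurent_pos y z"
  unfolding laurent_pos_def by (rule summable_sums[OF summable_laurent_pos])

lemma isCont_laurent_pos: "norm y < 1 \<Longrightarrow> isCont (laurent_pos y) z"
  unfolding laurent_pos_def[abs_def]
  by (rule isCont_powser_converges_everywhere) (rule summable_laurent_pos)

lemma oddprod_mult_inverse:
  fixes y z :: complex assumes y: "norm y < 1" and z: "z \<noteq> 0"
  shows "oddprod y z * oddprod y (1/z) = laurent_pos y z + laurent_pos y (1/z) - laurent_coeff y 0"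
proof -
  obtain V1 V2 where V1: "((\<lambda>n. laurent_coeff y n * z^n) has_sum V1) UNIV"
    and V2: "((\<lambda>n. laurent_coeff y (Suc n) * (1/z)^(Suc n)) has_sum V2) UNIV"
    and eq: "oddprod y z * oddprod y (1/z) = V1 + V2"
    using oddprod_mult_laurent[OF y, of z "1/z"] z by auto
  have "laurent_pos y z = V1"
    using has_sum_imp_sums[OF V1] laurent_pos_sums[OF y] sums_unique2 by blast
  moreover have "(\<lambda>n. laurent_coeff y n * (1/z)^n) sums (V2 + laurent_coeff y 0)"
    using sums_Suc_iff[of "\<lambda>n. laurent_coeff y n * (1/z)^n" V2] has_sum_imp_sums[OF V2] by simp
  then have "laurent_pos y (1/z) = V2 + laurent_coeff y 0"
    using laurent_pos_sums[OF y] sums_unique2 by blast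
  ultimately show ?thesis using eq by simp
qed

definition laurent_tail :: "complex \<Rightarrow> complex \<Rightarrow> complex" where
  "laurent_tail y u = (\<Sum>n. laurent_coeff y (Suc (Suc n)) * u^n)"

lemma summable_laurent_tail:
  "norm y < 1 \<Longrightarrow> summable (\<lambda>n. laurent_coeff y (Suc (Suc n)) * u^n)"
  by (intro powser_split_head(3) summable_laurent_pos)

lemma isCont_laurent_tail: "norm y < 1 \<Longrightarrow> isCont (laurent_tail y) u"
  unfolding laurent_tail_def[abs_def]
  by (rule isCont_powser_converges_everywhere) (rule summable_laurent_tail)

lemma laurent_pos_split:
  assumes y: "norm y < 1"
  shows "laurent_pos y u = laurent_coeff y 0 + laurent_coeff y 1 * u + u^2 * laurent_tail y u"
proof -
  have s0: "summable (\<lambda>n. laurent_coeff y n * u^n)" by (rule summable_laurent_pos[OF y])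
  have s1: "summable (\<lambda>n. laurent_coeff y (Suc n) * u^n)" by (rule powser_split_head(3)[OF s0])
  have "laurent_pos y u = laurent_coeff y 0 + (\<Sum>n. laurent_coeff y (Suc n) * u^n) * u"
    unfolding laurent_pos_def by (rule powser_split_head(1)[OF s0])
  also have "(\<Sum>n. laurent_coeff y (Suc n) * u^n) = laurent_coeff y 1 + laurent_tail y u * u"
    unfolding laurent_tail_def using powser_split_head(1)[OF s1] by simp
  finally show ?thesis by (simp add: algebra_simps power2_eq_square)
qed

lemma oddprod_mult_inverse_quasi_periodic:
  fixes y z :: complex assumes y: "norm y < 1" and y0: "y \<noteq> 0" and z0: "z \<noteq> 0"
  shows "y*z * (oddprod y (y^2*z) * oddprod y (1/(y^2*z))) = oddprod y z * oddprod y (1/z)"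
proof -
  have "y * (1/(y^2*z)) = 1/(y*z)" and "y^2 * (1/(y^2*z)) = 1/z"
    using y0 z0 by (simp_all add: power2_eq_square field_simps)
  then have inv: "oddprod y (1/(y^2*z)) = (1 + 1/(y*z)) * oddprod y (1/z)"
    using oddprod_functional_eq[OF y, of "1/(y^2*z)"] by simp
  show ?thesis
    unfolding inv oddprod_functional_eq[OF y, of z] using y0 z0 by (simp add: field_simps)
qed

text \<open>The coefficients of G(z) = y z P(y^2 z) + a_1/y - P(z), where P = laurent_pos y. The power series
  G is entire, and quasi-periodicity writes G(z) for z \<noteq> 0 as a function of 1/z that is continuous at 0;
  so G is bounded, hence constant by Liouville's theorem, and its coefficients of positive index vanish.\<close>

fun laurent_defect :: "complex \<Rightarrow> nat \<Rightarrow> complex" where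
  "laurent_defect y 0 = laurent_coeff y 1 / y - laurent_coeff y 0"
| "laurent_defect y (Suc m) = y^(2*m+1) * laurent_coeff y m - laurent_coeff y (Suc m)"

lemma laurent_defect_sums:
  fixes y z :: complex assumes y: "norm y < 1"
  shows "(\<lambda>n. laurent_defect y n * z^n) sums
    (y*z * laurent_pos y (y^2*z) + laurent_coeff y 1 / y - laurent_pos y z)"
proof -
  define g where "g = (\<lambda>k. if k = 0 then 0 else y*z * (laurent_coeff y (k-1) * (y^2*z)^(k-1)))"
  have "(\<lambda>n. g (Suc n)) sums (y*z * laurent_pos y (y^2*z))"
    using sums_mult[OF laurent_pos_sums[OF y]] by (simp add: g_def)
  then have "g sums (y*z * laurent_pos y (y^2*z))" by (subst (asm) sums_Suc_iff) (simp add: g_def)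
  moreover have "(\<lambda>n. if n = 0 then laurent_coeff y 1 / y else 0) sums (laurent_coeff y 1 / y)"
    using sums_single[of 0 "\<lambda>_. laurent_coeff y 1 / y"] by simp
  ultimately have "(\<lambda>n. g n + (if n = 0 then laurent_coeff y 1 / y else 0) - laurent_coeff y n * z^n) sums
      (y*z * laurent_pos y (y^2*z) + laurent_coeff y 1 / y - laurent_pos y z)"
    by (intro sums_diff sums_add laurent_pos_sums[OF y])
  moreover have "g n + (if n = 0 then laurent_coeff y 1 / y else 0) - laurent_coeff y n * z^n
      = laurent_defect y n * z^n" for n
  proof (cases n)
    case (Suc m)
    have p: "y*z*(y^2*z)^m = y^(2*m+1)*z^(Suc m)"
      by (simp only: power_mult_distrib power_mult[symmetric]) (simp add: mult_ac)
    have "g n = laurent_coeff y m * (y*z*(y^2*z)^m)" by (simp add: g_def Suc mult_ac)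
    then have "g n = y^(2*m+1) * laurent_coeff y m * z^(Suc m)" unfolding p by (simp add: mult_ac)
    then show ?thesis by (simp add: Suc algebra_simps)
  qed (simp add: g_def)
  ultimately show ?thesis by simp
qed

lemma laurent_defect_sum_at_inverse:
  fixes y z :: complex assumes y: "norm y < 1" and y0: "y \<noteq> 0" and z0: "z \<noteq> 0"
  shows "y*z * laurent_pos y (y^2*z) + laurent_coeff y 1 / y - laurent_pos y z
    = laurent_pos y (1/z) - laurent_coeff y 0 - ((1/z) / y^3) * laurent_tail y ((1/z) / y^2)"
proof -
  have "y^2*z \<noteq> 0" using y0 z0 by simp
  then have quasi: "y*z * (laurent_pos y (y^2*z) + laurent_pos y (1/(y^2*z)) - laurent_coeff y 0)
      = laurent_pos y z + laurent_pos y (1/z) - laurent_coeff y 0"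
    using oddprod_mult_inverse_quasi_periodic[OF y y0 z0]
    by (simp add: oddprod_mult_inverse[OF y] z0)
  have "1/(y^2*z) = (1/z)/y^2" by simp
  then have split: "laurent_pos y (1/(y^2*z)) = laurent_coeff y 0 + laurent_coeff y 1 * ((1/z)/y^2)
      + ((1/z)/y^2)^2 * laurent_tail y ((1/z)/y^2)"
    by (simp only: laurent_pos_split[OF y])
  then have "y*z * (laurent_pos y (1/(y^2*z)) - laurent_coeff y 0)
      = laurent_coeff y 1 / y + ((1/z) / y^3) * laurent_tail y ((1/z) / y^2)"
    unfolding split using y0 z0 by (simp add: field_simps power2_eq_square power3_eq_cube)
  with quasi show ?thesis by (simp add: algebra_simps)
qed

lemma laurent_coeff_Suc:
  fixes y :: complex assumes y: "norm y < 1" and y0: "y \<noteq> 0"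
  shows "laurent_coeff y (Suc m) = y^(2*m+1) * laurent_coeff y m"
proof -
  define G where "G = (\<lambda>z. \<Sum>n. laurent_defect y n * z^n)"
  have sums: "(\<lambda>n. laurent_defect y n * z^n) sums G z" for z
    unfolding G_def using laurent_defect_sums[OF y] sums_summable summable_sums by blast
  have "G holomorphic_on UNIV"
    unfolding G_def holomorphic_on_open[OF open_UNIV]
    using termdiffs_strong_converges_everywhere sums sums_summable by blast
  moreover have "continuous_on (cball 0 1)
      (\<lambda>u. laurent_pos y u - laurent_coeff y 0 - (u / y^3) * laurent_tail y (u / y^2))"
    using y0 by (intro continuous_at_imp_continuous_on ballI continuous_intros isCont_laurent_pos[OF y]
        isCont_o2[OF _ isCont_laurent_tail[OF y]]) simp_all
  moreover have "G z = laurent_pos y (1/z) - laurent_coeff y 0 - ((1/z) / y^3) * laurent_tail y ((1/z) / y^2)"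
    if "z \<noteq> 0" for z
    using sums laurent_defect_sums[OF y] laurent_defect_sum_at_inverse[OF y y0 that] sums_unique2 by metis
  ultimately have "G constant_on UNIV" by (rule entire_constant_if_continuous_at_infinity)
  then have "laurent_defect y (Suc m) = 0"
    by (intro powser_coeff_eq_0_if_constant[OF sums]) (auto simp: constant_on_def)
  then show ?thesis by simp
qed

lemma laurent_coeff_eq:
  fixes y :: complex assumes "norm y < 1" and "y \<noteq> 0"
  shows "laurent_coeff y n = y^(n^2) * laurent_coeff y 0"
proof (induction n)
  case (Suc n)
  have "Suc n ^ 2 = (2*n+1) + n^2" by (simp add: power2_eq_square)
  then show ?case by (simp only: laurent_coeff_Suc[OF assms] Suc power_add mult.assoc)
qed simp

text \<open>The constant laurent_coeff y 0 is never computed; it only matters that it is nonzero.\<close>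

theorem jacobi_triple_product:
  fixes y z :: complex assumes y: "norm y < 1" and y0: "y \<noteq> 0" and z0: "z \<noteq> 0"
  shows "((\<lambda>n::int. laurent_coeff y 0 * (y ^ nat (n^2) * z powi n))
    has_sum oddprod y z * oddprod y (1/z)) UNIV"
proof -
  obtain V1 V2 where V1: "((\<lambda>n. laurent_coeff y n * z^n) has_sum V1) UNIV"
    and V2: "((\<lambda>n. laurent_coeff y (Suc n) * (1/z)^(Suc n)) has_sum V2) UNIV"
    and eq: "oddprod y z * oddprod y (1/z) = V1 + V2"
    using oddprod_mult_laurent[OF y, of z "1/z"] z0 by auto
  have pos: "laurent_coeff y n * z^n = laurent_coeff y 0 * (y ^ nat ((int n)^2) * z powi (int n))" for n :: nat
  proof -
    have "(int n)^2 = int (n^2)" by simp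
    then show ?thesis using laurent_coeff_eq[OF y y0, of n] by (simp only: nat_int) (simp add: mult_ac)
  qed
  have neg: "laurent_coeff y (Suc n) * (1/z)^(Suc n)
      = laurent_coeff y 0 * (y ^ nat ((- int n - 1)^2) * z powi (- int n - 1))" for n :: nat
  proof -
    have "(- int n - 1)^2 = int ((Suc n)^2)" by (simp add: power2_eq_square algebra_simps)
    moreover have "z powi (- int n - 1) = (1/z)^(Suc n)"
      by (simp add: power_int_def nat_add_distrib power_inverse divide_inverse)
    ultimately show ?thesis
      using laurent_coeff_eq[OF y y0, of "Suc n"] by (simp only: nat_int) (simp add: mult_ac)
  qed
  show ?thesis
    unfolding eq using V1 V2 by (intro has_sum_int_nat_split) (simp_all only: pos neg)
qed

lemma laurent_coeff_0_nonzero: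
  assumes y: "norm y < 1" and y0: "y \<noteq> 0"
  shows "laurent_coeff y 0 \<noteq> 0"
proof
  assume "laurent_coeff y 0 = 0"
  then have "oddprod y 1 * oddprod y 1 = 0"
    using jacobi_triple_product[OF y y0, of 1] has_sum_0[of UNIV "\<lambda>_. 0::complex"] has_sum_unique
    by fastforce
  then show False using oddprod_1_nonzero[OF y] by simp
qed

section \<open>Theta functions and their duplication formulas\<close>

text \<open>theta3 is Jacobi's theta_3 in the nome y, and y^(1/4) theta2_red y is theta_2.\<close>

definition theta3 :: "complex \<Rightarrow> complex" where
  "theta3 y = (\<Sum>\<^sub>\<infinity>n::int. y ^ nat (n^2))"

definition theta2_red :: "complex \<Rightarrow> complex" where
  "theta2_red y = (\<Sum>\<^sub>\<infinity>n::int. y ^ nat (n^2 + n))"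

lemma
  assumes y: "norm y < 1" and y0: "y \<noteq> 0"
  shows theta3_has_sum: "((\<lambda>n::int. y ^ nat (n^2)) has_sum theta3 y) UNIV"
    and oddprod_1_square: "oddprod y 1 ^ 2 = laurent_coeff y 0 * theta3 y"
proof -
  have "((\<lambda>n::int. laurent_coeff y 0 * y ^ nat (n^2)) has_sum oddprod y 1 ^ 2) UNIV"
    using jacobi_triple_product[OF y y0, of 1] by (simp add: power2_eq_square)
  then have "((\<lambda>n::int. y ^ nat (n^2)) has_sum oddprod y 1 ^ 2 / laurent_coeff y 0) UNIV"
    by (simp only: has_sum_cmult_right_iff[OF laurent_coeff_0_nonzero[OF y y0]])
  moreover from this have "theta3 y = oddprod y 1 ^ 2 / laurent_coeff y 0"
    unfolding theta3_def by (rule infsumI)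
  ultimately show "((\<lambda>n::int. y ^ nat (n^2)) has_sum theta3 y) UNIV"
    and "oddprod y 1 ^ 2 = laurent_coeff y 0 * theta3 y"
    using laurent_coeff_0_nonzero[OF y y0] by simp_all
qed

lemma
  assumes y: "norm y < 1" and y0: "y \<noteq> 0"
  shows theta2_red_has_sum: "((\<lambda>n::int. y ^ nat (n^2 + n)) has_sum theta2_red y) UNIV"
    and oddprod_self_square: "2 * oddprod y y ^ 2 = laurent_coeff y 0 * theta2_red y"
proof -
  have "((\<lambda>n::int. laurent_coeff y 0 * y ^ nat (n^2 + n)) has_sum 2 * oddprod y y ^ 2) UNIV"
    using jacobi_triple_product[OF y y0 y0]
    by (simp only: oddprod_inverse_self[OF y y0] power_nat_square_mult_powi[OF y0])
       (simp add: power2_eq_square mult_ac)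
  then have "((\<lambda>n::int. y ^ nat (n^2 + n)) has_sum 2 * oddprod y y ^ 2 / laurent_coeff y 0) UNIV"
    by (simp only: has_sum_cmult_right_iff[OF laurent_coeff_0_nonzero[OF y y0]])
  moreover from this have "theta2_red y = 2 * oddprod y y ^ 2 / laurent_coeff y 0"
    unfolding theta2_red_def by (rule infsumI)
  ultimately show "((\<lambda>n::int. y ^ nat (n^2 + n)) has_sum theta2_red y) UNIV"
    and "2 * oddprod y y ^ 2 = laurent_coeff y 0 * theta2_red y"
    using laurent_coeff_0_nonzero[OF y y0] by simp_all
qed

lemma theta3_nonzero: "norm y < 1 \<Longrightarrow> y \<noteq> 0 \<Longrightarrow> theta3 y \<noteq> 0"
  using oddprod_1_square oddprod_1_nonzero by force

lemma theta3_has_sum_shift: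
  assumes "norm y < 1" and "y \<noteq> 0"
  shows "((\<lambda>n::int. y ^ nat ((n+1)^2)) has_sum theta3 y) UNIV"
proof -
  have "bij_betw (\<lambda>n::int. n+1) UNIV UNIV" by (rule bij_betwI[of _ _ _ "\<lambda>n. n-1"]) auto
  then show ?thesis using has_sum_reindex_bij_betw theta3_has_sum[OF assms] by fast
qed

lemma theta3_square_duplication:
  fixes x :: complex assumes x: "norm x < 1" "x \<noteq> 0"
  shows "theta3 x ^ 2 = theta3 (x^2) ^ 2 + x * theta2_red (x^2) ^ 2"
proof -
  have x2: "norm (x^2) < 1" "x^2 \<noteq> 0" using x by (simp_all add: norm_power abs_square_less_1)
  define h where "h = (\<lambda>(m::int, n::int). x ^ nat (m^2) * x ^ nat (n^2))"
  have "(h has_sum theta3 x * theta3 x) UNIV"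
    using has_sum_product[OF theta3_has_sum[OF x] theta3_has_sum[OF x]] by (simp add: h_def)
  moreover have "h (i+j, i-j) = (x^2) ^ nat (i^2) * (x^2) ^ nat (j^2)" for i j
    by (simp add: h_def power_nat_add power2_power_nat) (simp add: power2_eq_square algebra_simps)
  then have "((\<lambda>(i,j). h (i+j, i-j)) has_sum theta3 (x^2) * theta3 (x^2)) UNIV"
    using has_sum_product[OF theta3_has_sum[OF x2] theta3_has_sum[OF x2]] by simp
  moreover have "h (i+j+1, i-j) = x * ((x^2) ^ nat (i^2 + i) * (x^2) ^ nat (j^2 + j))" for i j
  proof -
    have "h (i+j+1, i-j) = x ^ nat ((i+j+1)^2 + (i-j)^2)" by (simp add: h_def power_nat_add)
    also have "(i+j+1)^2 + (i-j)^2 = 1 + 2*(i^2 + i) + 2*(j^2 + j)"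
      by (simp add: power2_eq_square algebra_simps)
    finally show ?thesis
      using square_plus_self_nonneg[of i] square_plus_self_nonneg[of j]
      by (simp add: nat_add_distrib power_add power2_power_nat)
  qed
  then have "((\<lambda>(i,j). h (i+j+1, i-j)) has_sum x * (theta2_red (x^2) * theta2_red (x^2))) UNIV"
    using has_sum_cmult_right[OF has_sum_product[OF theta2_red_has_sum[OF x2] theta2_red_has_sum[OF x2]]]
    by (simp add: case_prod_unfold)
  ultimately have "theta3 x * theta3 x
      = theta3 (x^2) * theta3 (x^2) + x * (theta2_red (x^2) * theta2_red (x^2))"
    using has_sum_int_pairs_parity_split has_sum_unique by blast
  then show ?thesis by (simp add: power2_eq_square)
qed

lemma theta2_red_square_duplication:
  fixes x :: complex assumes x: "norm x < 1" "x \<noteq> 0"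
  shows "theta2_red x ^ 2 = 2 * theta2_red (x^2) * theta3 (x^2)"
proof -
  have x2: "norm (x^2) < 1" "x^2 \<noteq> 0" using x by (simp_all add: norm_power abs_square_less_1)
  define h where "h = (\<lambda>(m::int, n::int). x ^ nat (m^2 + m) * x ^ nat (n^2 + n))"
  have "(h has_sum theta2_red x * theta2_red x) UNIV"
    using has_sum_product[OF theta2_red_has_sum[OF x] theta2_red_has_sum[OF x]] by (simp add: h_def)
  moreover have "h (i+j, i-j) = (x^2) ^ nat (i^2 + i) * (x^2) ^ nat (j^2)" for i j
    using square_plus_self_nonneg[of "i+j"] square_plus_self_nonneg[of "i-j"] square_plus_self_nonneg[of i]
    by (simp add: h_def power_nat_add power2_power_nat) (simp add: power2_eq_square algebra_simps)
  then have "((\<lambda>(i,j). h (i+j, i-j)) has_sum theta2_red (x^2) * theta3 (x^2)) UNIV"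
    using has_sum_product[OF theta2_red_has_sum[OF x2] theta3_has_sum[OF x2]] by simp
  moreover have "h (i+j+1, i-j) = (x^2) ^ nat ((i+1)^2) * (x^2) ^ nat (j^2 + j)" for i j
    using square_plus_self_nonneg[of "i+j+1"] square_plus_self_nonneg[of "i-j"] square_plus_self_nonneg[of j]
    by (simp add: h_def power_nat_add power2_power_nat) (simp add: power2_eq_square algebra_simps)
  then have "((\<lambda>(i,j). h (i+j+1, i-j)) has_sum theta3 (x^2) * theta2_red (x^2)) UNIV"
    using has_sum_product[OF theta3_has_sum_shift[OF x2] theta2_red_has_sum[OF x2]] by simp
  ultimately have "theta2_red x * theta2_red x
      = theta2_red (x^2) * theta3 (x^2) + theta3 (x^2) * theta2_red (x^2)"
    using has_sum_int_pairs_parity_split has_sum_unique by blast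
  then show ?thesis by (simp add: power2_eq_square algebra_simps)
qed

section \<open>The modular equation for p\<close>

definition p_prod :: "complex \<Rightarrow> complex" where
  "p_prod y = (\<Prod>m. ((1 + y^(2*m+2)) / (1 + y^(2*m+1)))^2)"

lemma p_prod_eq_oddprod:
  fixes y :: complex assumes y: "norm y < 1"
  shows "p_prod y = (oddprod y y / oddprod y 1)^2"
proof -
  define f where "f = (\<lambda>m. ((1 + y^(2*m+2)) / (1 + y^(2*m+1)))^2)"
  define L where "L = (oddprod y y / oddprod y 1)^2"
  have "(\<Prod>m<N. f m) = ((\<Prod>m<N. 1 + y^(2*m+1)*y) / (\<Prod>m<N. 1 + y^(2*m+1)*1))^2" for N
    by (simp add: f_def mult_ac prod_dividef flip: prod_power_distrib)
  moreover have "(\<lambda>N. ((\<Prod>m<N. 1 + y^(2*m+1)*y) / (\<Prod>m<N. 1 + y^(2*m+1)*1))^2) \<longlonglongrightarrow> L"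
    unfolding L_def by (intro tendsto_power tendsto_divide LIMSEQ_oddprod[OF y] oddprod_1_nonzero[OF y])
  ultimately have "(\<lambda>N. \<Prod>m<N. f m) \<longlonglongrightarrow> L" by simp
  moreover have "L \<noteq> 0" unfolding L_def using oddprod_self_nonzero[OF y] oddprod_1_nonzero[OF y] by simp
  ultimately have "raw_has_prod f 0 L"
    using LIMSEQ_Suc by (fastforce simp: raw_has_prod_def lessThan_Suc_atMost)
  then have "f has_prod L" by (simp add: has_prod_def)
  then show ?thesis unfolding p_prod_def f_def L_def by (rule has_prod_unique[symmetric])
qed

lemma p_prod_eq_theta:
  fixes y :: complex assumes y: "norm y < 1" and y0: "y \<noteq> 0"
  shows "p_prod y = theta2_red y / (2 * theta3 y)"
proof -
  have "p_prod y = (2 * oddprod y y ^ 2) / (2 * oddprod y 1 ^ 2)"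
    unfolding p_prod_eq_oddprod[OF y] by (simp add: power_divide)
  also have "\<dots> = theta2_red y / (2 * theta3 y)"
    unfolding oddprod_self_square[OF y y0] oddprod_1_square[OF y y0]
    using laurent_coeff_0_nonzero[OF y y0] by simp
  finally show ?thesis .
qed

lemma p_prod_modular_equation:
  fixes x :: complex assumes x: "norm x < 1" "x \<noteq> 0"
  shows "p_prod x ^ 2 * (1 + 4 * x * p_prod (x^2) ^ 2) = p_prod (x^2)"
proof -
  have x2: "norm (x^2) < 1" "x^2 \<noteq> 0" using x by (simp_all add: norm_power abs_square_less_1)
  define s t where "s = theta3 (x^2)" and "t = theta2_red (x^2)"
  have s0: "s \<noteq> 0" "theta3 x \<noteq> 0" using theta3_nonzero x x2 by (simp_all add: s_def)
  have "1 + 4 * x * (t / (2 * s))^2 = theta3 x ^ 2 / s^2"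
    using theta3_square_duplication[OF x] s0 by (simp add: s_def t_def field_simps power2_eq_square)
  then have "p_prod x ^ 2 * (1 + 4 * x * p_prod (x^2) ^ 2) = theta2_red x ^ 2 / (4 * s^2)"
    using s0 by (simp add: p_prod_eq_theta x x2 s_def t_def power_divide field_simps)
  also have "\<dots> = t / (2 * s)"
    using theta2_red_square_duplication[OF x] s0 by (simp add: s_def t_def power2_eq_square)
  finally show ?thesis by (simp add: p_prod_eq_theta[OF x2] s_def t_def)
qed

lemma norm_qpow: "norm (qpow r \<tau>) = exp (- 2 * pi * r * Im \<tau>)"
  unfolding qpow_def by (simp add: norm_exp_eq_Re)

lemma qpow_mult_nat: "qpow (real k * r) \<tau> = qpow r \<tau> ^ k"
  unfolding qpow_def by (simp add: mult_ac flip: exp_of_nat_mult)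

lemma qpow_double: "qpow r (2 * \<tau>) = qpow r \<tau> ^ 2"
  using qpow_mult_nat[of 2 r \<tau>] unfolding qpow_def by (simp add: mult_ac)

lemma pfun_eq_p_prod: "pfun \<tau> = 2 * qpow (1/16) \<tau> * p_prod (qpow (1/16) \<tau> ^ 4)"
proof -
  have "qpow (real (Suc m) / 2) \<tau> = (qpow (1/16) \<tau> ^ 4) ^ (2*m+2)"
    and "qpow (real (Suc m) / 2 - 1/4) \<tau> = (qpow (1/16) \<tau> ^ 4) ^ (2*m+1)" for m
  proof -
    have "real (Suc m) / 2 = real (4 * (2*m+2)) * (1/16)"
      and "real (Suc m) / 2 - 1/4 = real (4 * (2*m+1)) * (1/16)" by simp_all
    then show "qpow (real (Suc m) / 2) \<tau> = (qpow (1/16) \<tau> ^ 4) ^ (2*m+2)"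
      and "qpow (real (Suc m) / 2 - 1/4) \<tau> = (qpow (1/16) \<tau> ^ 4) ^ (2*m+1)"
      by (simp_all only: qpow_mult_nat power_mult)
  qed
  then show ?thesis unfolding pfun_def p_prod_def by simp
qed

theorem proposition6:
  fixes \<tau> :: complex
  assumes "Im \<tau> > 0"
  shows "(pfun \<tau>)^2 * (pfun (2 * \<tau>))^2 + (pfun \<tau>)^2 - 2 * pfun (2 * \<tau>) = 0"
proof -
  define w where "w = qpow (1/16) \<tau>"
  have "norm w < 1" using assms by (simp add: w_def norm_qpow)
  then have w4: "norm (w^4) < 1" "w^4 \<noteq> 0"
    by (simp_all add: norm_power power_less_one_iff w_def qpow_def)
  have p1: "pfun \<tau> = 2 * w * p_prod (w^4)"
    unfolding w_def by (rule pfun_eq_p_prod)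
  have p2: "pfun (2 * \<tau>) = 2 * w^2 * p_prod ((w^4)^2)"
    using pfun_eq_p_prod[of "2 * \<tau>"] by (simp add: w_def qpow_double flip: power_mult)
  have "(pfun \<tau>)^2 * (pfun (2 * \<tau>))^2 + (pfun \<tau>)^2 - 2 * pfun (2 * \<tau>)
      = 4 * w^2 * (p_prod (w^4) ^ 2 * (1 + 4 * w^4 * p_prod ((w^4)^2) ^ 2) - p_prod ((w^4)^2))"
    unfolding p1 p2 by algebra
  also have "\<dots> = 0" unfolding p_prod_modular_equation[OF w4] by simp
  finally show ?thesis .
qed

end
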